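(* Let $T:\mathcal P(\mathbb R^n)\to\mathcal P(\mathbb R^n)$ be $TA=\{y:\langle x,y\rangle\ge 1\ \forall x\in A\}$, let $\mathcal C=\{TK:K\subseteq\mathbb R^n\}$, and let $\mathcal S$ be the set of $K\in\mathcal C\setminus\{\emptyset,\mathbb R^n\}$ whose (unique) point closest to the origin is $e_n$. Identify $\mathbb R^n=\mathbb R^{n-1}\times\mathbb R$. For $K\in\mathcal S$ let $\varphi:\mathbb R^{n-1}\to(0,\infty]$ be $\varphi(x)=\min\{t:(x,t)\in K\}$ (with $\varphi(x)=+\infty$ if no such $t$ exists), and define \[ \tilde T\varphi(y)=\sup_{x\in\mathbb R^{n-1},\ \varphi(x)<\infty}\frac{1-\langle x,y\rangle}{\varphi(x)},\qquad y\in\mathbb R^{n-1}. \] Then $\mathrm{epi}(\varphi)=K$ and $TK=\mathrm{epi}(\tilde T\varphi)$. Moreover, the map $K\mapsto\varphi$ is a bijection between $\mathcal S$ and the class of lower semi-continuous convex functions $\varphi$ on $\mathbb R^{n-1}$ whose minimal value is $\varphi(0)=1$ and which satisfy $-1\le\mathcal L\varphi(y)\le 0$ for all $y\in\mathrm{dom}(\mathcal L\varphi)$.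
   Context: $e_n=(0,\dots,0,1)$. For $\varphi:\mathbb R^{n-1}\to(-\infty,\infty]$, $\mathrm{epi}(\varphi)=\{(x,t)\in\mathbb R^{n-1}\times\mathbb R: t\ge\varphi(x)\}$. $\mathcal L\varphi(y)=\sup_{x}(\langle x,y\rangle-\varphi(x))$ is the Legendre transform and $\mathrm{dom}(\mathcal L\varphi)=\{y:\mathcal L\varphi(y)<\infty\}$. *)

theory Defs
  imports "HOL-Analysis.Analysis"
begin

text \<open>R^n is identified with R^(n-1) x R, realised as the product type 'a \<times> real,
  where 'a is a Euclidean space playing the role of R^(n-1).\<close>

definition en :: "'a::euclidean_space \<times> real" where
  "en = (0, 1)"

definition polarT :: "('a::euclidean_space \<times> real) set \<Rightarrow> ('a \<times> real) set" where
  "polarT A = {y. \<forall>x\<in>A. inner x y \<ge> 1}"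

definition classC :: "('a::euclidean_space \<times> real) set set" where
  "classC = range polarT"

definition classS :: "('a::euclidean_space \<times> real) set set" where
  "classS = {K \<in> classC. K \<noteq> {} \<and> K \<noteq> UNIV \<and> en \<in> K \<and> (\<forall>z\<in>K. norm (en::'a \<times> real) \<le> norm z)}"

text \<open>phi K x = min {t. (x,t) \<in> K}, and +\<infinity> if that set is empty (Inf of empty ereal set).\<close>
definition phiK :: "('a::euclidean_space \<times> real) set \<Rightarrow> 'a \<Rightarrow> ereal" where
  "phiK K x = (INF t\<in>{t. (x, t) \<in> K}. ereal t)"

definition epi :: "('a \<Rightarrow> ereal) \<Rightarrow> ('a \<times> real) set" where
  "epi \<phi> = {(x, t). \<phi> x \<le> ereal t}"

definition Ttilde :: "('a::euclidean_space \<Rightarrow> ereal) \<Rightarrow> 'a \<Rightarrow> ereal" where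
  "Ttilde \<phi> y = (SUP x\<in>{x. \<phi> x < \<infinity>}. ereal (1 - inner x y) / \<phi> x)"

definition legendre :: "('a::euclidean_space \<Rightarrow> ereal) \<Rightarrow> 'a \<Rightarrow> ereal" where
  "legendre \<phi> y = (SUP x. ereal (inner x y) - \<phi> x)"

definition ldom :: "('a \<Rightarrow> ereal) \<Rightarrow> 'a set" where
  "ldom f = {y. f y < \<infinity>}"

definition lsc :: "('a::topological_space \<Rightarrow> ereal) \<Rightarrow> bool" where
  "lsc \<phi> \<longleftrightarrow> (\<forall>x c. c < \<phi> x \<longrightarrow> (\<forall>\<^sub>F z in nhds x. c < \<phi> z))"

definition convex_fun :: "('a::euclidean_space \<Rightarrow> ereal) \<Rightarrow> bool" where
  "convex_fun \<phi> \<longleftrightarrow> (\<forall>x. \<phi> x \<noteq> -\<infinity>) \<and> convex (epi \<phi>)"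

definition classF :: "('a::euclidean_space \<Rightarrow> ereal) set" where
  "classF = {\<phi>. lsc \<phi> \<and> convex_fun \<phi> \<and> \<phi> 0 = 1 \<and> (\<forall>x. \<phi> 0 \<le> \<phi> x)
             \<and> (\<forall>y\<in>ldom (legendre \<phi>). -1 \<le> legendre \<phi> y \<and> legendre \<phi> y \<le> 0)}"

end

theory Submission
  imports Defs
begin

(* A set K in classS is an intersection of halfspaces {z. 1 <= <a, z>} with <a, e_n> >= 1
   (as e_n lies in K), so it is closed, convex, stable under z -> z + s e_n for s >= 0
   and under dilations by factors >= 1; since e_n is its nearest point to the origin,
   K also lies in {t >= 1}.  Hence K is the epigraph of phi = phiK K, dilation invariance
   of epi phi gives L phi <= 0 on dom (L phi), and L phi >= -phi 0 = -1.  The polar of an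
   epigraph is computed fibrewise and is the epigraph of T~ phi.
   Conversely, let phi be in classF and z a point outside epi phi.  Separating z from the
   closed convex set epi phi and tilting the hyperplane by e_n yields an affine minorant
   <x, y> + b of phi passing above z.  Because L phi (y) <= 0, the intercept may be raised
   to max 0 b, and one more tilt turns this into a halfspace {1 <= <., w>} containing
   epi phi but not z.  So epi phi = T (T (epi phi)) belongs to classC, and
   phiK (epi phi) = phi makes phiK a bijection. *)

lemma polarT_closed: "closed (polarT A)"
proof -
  have "polarT A = (\<Inter>x\<in>A. {y. 1 \<le> inner x y})"
    unfolding polarT_def by auto
  then show ?thesis
    by (simp add: closed_INT closed_halfspace_ge)
qed

lemma polarT_convex: "convex (polarT A)"
proof -
  have "polarT A = (\<Inter>x\<in>A. {y. 1 \<le> inner x y})"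
    unfolding polarT_def by auto
  then show ?thesis
    by (simp add: convex_INT convex_halfspace_ge)
qed

lemma polarT_scaleR:
  assumes "y \<in> polarT A" "1 \<le> l"
  shows "l *\<^sub>R y \<in> polarT A"
proof -
  have "1 \<le> l * inner x y" if "x \<in> A" for x
  proof -
    have "1 \<le> inner x y"
      using assms(1) that by (simp add: polarT_def)
    with assms(2) show ?thesis
      by (rule mult_ge1_I)
  qed
  then show ?thesis
    by (simp add: polarT_def)
qed

lemma polarT_add_recession:
  assumes "y \<in> polarT A" "\<And>a. a \<in> A \<Longrightarrow> 0 \<le> inner a d" "0 \<le> s"
  shows "y + s *\<^sub>R d \<in> polarT A"
proof -
  have "1 \<le> inner a y + s * inner a d" if "a \<in> A" for a
  proof -
    have "1 \<le> inner a y"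
      using assms(1) that by (simp add: polarT_def)
    moreover have "0 \<le> s * inner a d"
      using assms(2,3) that by simp
    ultimately show ?thesis
      by linarith
  qed
  then show ?thesis
    by (simp add: polarT_def inner_add_right)
qed

lemma subset_polarT_polarT: "K \<subseteq> polarT (polarT K)"
  unfolding polarT_def by (auto simp: inner_commute)

lemma classC_closed: "K \<in> classC \<Longrightarrow> closed K"
  unfolding classC_def using polarT_closed by auto

lemma classC_convex: "K \<in> classC \<Longrightarrow> convex K"
  unfolding classC_def using polarT_convex by auto

lemma classC_scaleR: "K \<in> classC \<Longrightarrow> p \<in> K \<Longrightarrow> 1 \<le> l \<Longrightarrow> l *\<^sub>R p \<in> K"
  unfolding classC_def using polarT_scaleR by blast

lemma classS_snd_ge_1:
  fixes K :: "('a::euclidean_space \<times> real) set"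
  assumes K: "K \<in> classS" and xt: "(x, t) \<in> K"
  shows "1 \<le> t"
proof -
  have "K \<in> classC" "en \<in> K" "\<forall>z\<in>K. norm (en::'a \<times> real) \<le> norm z"
    using K by (simp_all add: classS_def)
  then have "closed K" "convex K" "en \<in> K" "\<forall>z\<in>K. dist 0 (en::'a \<times> real) \<le> dist 0 z"
    by (simp_all add: classC_closed classC_convex dist_norm)
  from any_closest_point_dot[OF this(2,1,3) xt this(4)]
  have "inner (0 - en) ((x, t) - en) \<le> 0" .
  then show ?thesis
    by (simp add: en_def)
qed

lemma classS_upward:
  assumes K: "K \<in> classS" and xt: "(x, t) \<in> K" and "t \<le> s"
  shows "(x, s) \<in> K"
proof -
  obtain A where KA: "K = polarT A" and "en \<in> K"
    using K by (auto simp: classS_def classC_def)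
  then have "0 \<le> inner a en" if "a \<in> A" for a
    using that by (force simp: polarT_def)
  with polarT_add_recession[of "(x, t)" A en "s - t"] xt KA \<open>t \<le> s\<close> show ?thesis
    by (simp add: en_def)
qed

lemma phiK_epi: "phiK (epi \<phi>) = \<phi>"
proof
  fix x
  have "phiK (epi \<phi>) x = (INF t\<in>{t. \<phi> x \<le> ereal t}. ereal t)"
    by (simp add: phiK_def epi_def)
  also have "\<dots> = \<phi> x"
  proof (rule antisym)
    show "\<phi> x \<le> (INF t\<in>{t. \<phi> x \<le> ereal t}. ereal t)"
      by (rule INF_greatest) simp
    show "(INF t\<in>{t. \<phi> x \<le> ereal t}. ereal t) \<le> \<phi> x"
    proof (cases "\<phi> x")
      case (real r)
      then show ?thesis
        by (intro INF_lower2[of r]) auto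
    next
      case PInf
      then show ?thesis
        by simp
    next
      case MInf
      then have "(INF t\<in>{t. \<phi> x \<le> ereal t}. ereal t) \<le> ereal B" for B
        by (intro INF_lower2[of B]) auto
      with MInf show ?thesis
        using ereal_bot by auto
    qed
  qed
  finally show "phiK (epi \<phi>) x = \<phi> x" .
qed

lemma epi_phiK:
  assumes "closed K" and upward: "\<And>x t s. (x, t) \<in> K \<Longrightarrow> t \<le> s \<Longrightarrow> (x, s) \<in> K"
  shows "epi (phiK K) = K"
proof -
  have "(x, t) \<in> K" if le: "phiK K x \<le> ereal t" for x t
  proof -
    have "(x, t + \<epsilon>) \<in> K" if "0 < \<epsilon>" for \<epsilon>
    proof -
      have "phiK K x < ereal (t + \<epsilon>)"
        using le that by (simp add: le_less_trans)
      then obtain s where "(x, s) \<in> K" "s < t + \<epsilon>"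
        by (auto simp: phiK_def INF_less_iff)
      with upward show ?thesis
        by force
    qed
    then have "\<exists>p\<in>K. dist p (x, t) < \<epsilon>" if "0 < \<epsilon>" for \<epsilon>
      using that by (intro bexI[of _ "(x, t + \<epsilon> / 2)"]) (auto simp: dist_Pair_Pair dist_real_def)
    with \<open>closed K\<close> show ?thesis
      using closed_approachable by blast
  qed
  moreover have "phiK K x \<le> ereal t" if "(x, t) \<in> K" for x t
    using that unfolding phiK_def by (intro INF_lower2[of t]) auto
  ultimately show ?thesis
    by (auto simp: epi_def)
qed

lemma epi_snd_ge:
  assumes "\<And>x. c \<le> \<phi> x" and "(x, t) \<in> epi \<phi>"
  shows "c \<le> ereal t"
  using assms order_trans by (auto simp: epi_def)

lemma lsc_iff_closed_epi: "lsc \<phi> \<longleftrightarrow> closed (epi \<phi>)"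
proof
  assume lower: "lsc \<phi>"
  have "\<exists>T. open T \<and> p \<in> T \<and> T \<subseteq> - epi \<phi>" if "p \<notin> epi \<phi>" for p
  proof -
    obtain x t where p: "p = (x, t)" and "ereal t < \<phi> x"
      using \<open>p \<notin> epi \<phi>\<close> by (cases p) (auto simp: epi_def)
    then obtain c where c: "t < c" "ereal c < \<phi> x"
      using ereal_dense2 by force
    then have "\<forall>\<^sub>F z in nhds x. ereal c < \<phi> z"
      using lower by (simp add: lsc_def)
    then obtain U where U: "open U" "x \<in> U" "\<And>z. z \<in> U \<Longrightarrow> ereal c < \<phi> z"
      by (auto simp: eventually_nhds)
    have "U \<times> {..<c} \<subseteq> - epi \<phi>"
    proof clarify
      fix a b
      assume "a \<in> U" "b < c" "(a, b) \<in> epi \<phi>"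
      have "ereal c < \<phi> a"
        using U(3) \<open>a \<in> U\<close> .
      also have "\<phi> a \<le> ereal b"
        using \<open>(a, b) \<in> epi \<phi>\<close> by (simp add: epi_def)
      finally show False
        using \<open>b < c\<close> by simp
    qed
    moreover have "open (U \<times> {..<c})"
      using U(1) by (intro open_Times) auto
    ultimately show ?thesis
      using p U(2) c(1) by blast
  qed
  then have "open (- epi \<phi>)"
    by (subst open_subopen) blast
  then show "closed (epi \<phi>)"
    by (simp add: closed_def)
next
  assume epi_closed: "closed (epi \<phi>)"
  show "lsc \<phi>"
    unfolding lsc_def
  proof (intro allI impI)
    fix x c
    assume "c < \<phi> x"
    then obtain r where r: "c < ereal r" "ereal r < \<phi> x"
      using ereal_dense2 by blast
    have "closed ((\<lambda>z. (z, r)) -` epi \<phi>)"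
      using epi_closed by (intro closed_vimage continuous_intros)
    then have "open {z. ereal r < \<phi> z}"
      by (simp add: epi_def Collect_neg_eq[symmetric] not_less open_closed)
    with r show "\<forall>\<^sub>F z in nhds x. c < \<phi> z"
      unfolding eventually_nhds by (intro exI[of _ "{z. ereal r < \<phi> z}"]) auto
  qed
qed

lemma polarT_epi_eq_epi_Ttilde:
  fixes \<phi> :: "'a::euclidean_space \<Rightarrow> ereal"
  assumes pos: "\<And>x. 0 < \<phi> x" and dom0: "\<phi> 0 < \<infinity>"
  shows "polarT (epi \<phi>) = epi (Ttilde \<phi>)"
proof (rule set_eqI)
  fix p :: "'a \<times> real"
  obtain w s where p: "p = (w, s)"
    by force
  have finite_pos: "\<exists>m. \<phi> x = ereal m \<and> 0 < m" if "\<phi> x < \<infinity>" for x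
    using that pos[of x] by (cases "\<phi> x") auto
  have quotient_le_iff: "ereal (1 - inner x w) / ereal m \<le> ereal s \<longleftrightarrow> 1 \<le> inner x w + m * s"
    if "0 < m" for x m
    using that by (simp add: divide_le_eq algebra_simps)
  have "p \<in> polarT (epi \<phi>) \<longleftrightarrow> (\<forall>x t. \<phi> x \<le> ereal t \<longrightarrow> 1 \<le> inner x w + t * s)"
    by (auto simp: polarT_def epi_def p)
  also have "\<dots> \<longleftrightarrow> (\<forall>x. \<phi> x < \<infinity> \<longrightarrow> ereal (1 - inner x w) / \<phi> x \<le> ereal s)"
  proof safe
    fix x
    assume "\<forall>x t. \<phi> x \<le> ereal t \<longrightarrow> 1 \<le> inner x w + t * s" and "\<phi> x < \<infinity>"
    then show "ereal (1 - inner x w) / \<phi> x \<le> ereal s"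
      using finite_pos quotient_le_iff by (force simp: mult.commute)
  next
    fix x t
    assume quot: "\<forall>x. \<phi> x < \<infinity> \<longrightarrow> ereal (1 - inner x w) / \<phi> x \<le> ereal s"
      and "\<phi> x \<le> ereal t"
    obtain m0 where "\<phi> 0 = ereal m0" "0 < m0"
      using finite_pos dom0 by blast
    then have "1 \<le> m0 * s"
      using quot[rule_format, of 0] dom0 quotient_le_iff[of m0 0] by simp
    with \<open>0 < m0\<close> have "0 < s"
      using zero_less_mult_pos[of m0 s] by linarith
    have "\<phi> x < \<infinity>"
      using \<open>\<phi> x \<le> ereal t\<close> by (cases "\<phi> x") auto
    then obtain m where m: "\<phi> x = ereal m" "0 < m"
      using finite_pos by blast
    then have "1 \<le> inner x w + m * s" "m * s \<le> t * s"
      using quot[rule_format, of x] quotient_le_iff[of m x] \<open>\<phi> x \<le> ereal t\<close> \<open>0 < s\<close>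
      by (auto intro: mult_right_mono)
    then show "1 \<le> inner x w + t * s"
      by linarith
  qed
  also have "\<dots> \<longleftrightarrow> p \<in> epi (Ttilde \<phi>)"
    by (simp add: epi_def p Ttilde_def SUP_le_iff)
  finally show "p \<in> polarT (epi \<phi>) \<longleftrightarrow> p \<in> epi (Ttilde \<phi>)" .
qed

lemma legendre_le_iff:
  "legendre \<phi> y \<le> ereal c \<longleftrightarrow> (\<forall>x t. (x, t) \<in> epi \<phi> \<longrightarrow> inner x y - c \<le> t)"
proof -
  have "ereal (inner x y) - \<phi> x \<le> ereal c \<longleftrightarrow> (\<forall>t. \<phi> x \<le> ereal t \<longrightarrow> inner x y - c \<le> t)" for x
  proof (cases "\<phi> x")
    case MInf
    then show ?thesis
      by (auto intro: exI[of _ "inner x y - c - 1"])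
  qed (auto simp: algebra_simps)
  then show ?thesis
    by (simp add: legendre_def SUP_le_iff epi_def)
qed

lemma legendre_nonpos:
  assumes scale: "\<And>p l. p \<in> epi \<phi> \<Longrightarrow> 1 \<le> l \<Longrightarrow> l *\<^sub>R p \<in> epi \<phi>"
    and in_dom: "legendre \<phi> y < \<infinity>"
  shows "legendre \<phi> y \<le> 0"
proof (rule ccontr)
  assume "\<not> legendre \<phi> y \<le> 0"
  then obtain B where B: "legendre \<phi> y = ereal B"
    using in_dom by (cases "legendre \<phi> y") auto
  from \<open>\<not> legendre \<phi> y \<le> 0\<close> obtain x where "0 < ereal (inner x y) - \<phi> x"
    by (auto simp: legendre_def less_SUP_iff not_le)
  moreover have "\<phi> x \<noteq> -\<infinity>"
  proof
    assume "\<phi> x = -\<infinity>"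
    then have "(x, inner x y - B - 1) \<in> epi \<phi>"
      by (simp add: epi_def)
    then show False
      using legendre_le_iff[of \<phi> y B] B by fastforce
  qed
  ultimately obtain m where m: "\<phi> x = ereal m" and d: "0 < inner x y - m"
    by (cases "\<phi> x") auto
  define l where "l = max 1 ((\<bar>B\<bar> + 1) / (inner x y - m))"
  have "(l *\<^sub>R x, l * m) \<in> epi \<phi>"
    using scale[of "(x, m)" l] m by (simp add: epi_def l_def)
  moreover have "\<forall>x t. (x, t) \<in> epi \<phi> \<longrightarrow> inner x y - B \<le> t"
    using legendre_le_iff[of \<phi> y B] B by simp
  ultimately have "inner (l *\<^sub>R x) y - B \<le> l * m"
    by blast
  then have "l * (inner x y - m) \<le> B"
    by (simp add: algebra_simps)
  moreover have "\<bar>B\<bar> + 1 \<le> l * (inner x y - m)"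
    using d by (simp add: l_def pos_divide_le_eq max_def mult_right_mono)
  ultimately show False
    by linarith
qed

lemma halfspace_tilt:
  fixes z w e :: "'b::real_inner"
  assumes z: "inner z w < m" and K: "\<And>k. k \<in> K \<Longrightarrow> m \<le> inner k w"
    and e: "\<And>k. k \<in> K \<Longrightarrow> 1 \<le> inner k e"
  obtains \<delta> where "0 < \<delta>" "\<And>k. k \<in> K \<Longrightarrow> m + \<delta> \<le> inner k (w + \<delta> *\<^sub>R e)"
    "inner z (w + \<delta> *\<^sub>R e) < m + \<delta>"
proof
  define \<delta> where "\<delta> = (m - inner z w) / (\<bar>inner z e\<bar> + 2)"
  show "0 < \<delta>"
    using z by (simp add: \<delta>_def)
  show "m + \<delta> \<le> inner k (w + \<delta> *\<^sub>R e)" if "k \<in> K" for k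
  proof -
    have "\<delta> \<le> \<delta> * inner k e"
      using e[OF that] \<open>0 < \<delta>\<close> by (simp add: mult_le_cancel_left1)
    with K[OF that] show ?thesis
      by (simp add: inner_add_right)
  qed
  have "\<delta> * (\<bar>inner z e\<bar> + 2) = m - inner z w"
    by (simp add: \<delta>_def)
  moreover have "\<delta> * inner z e \<le> \<delta> * \<bar>inner z e\<bar>"
    using \<open>0 < \<delta>\<close> by (simp add: mult_left_mono)
  moreover have "inner z (w + \<delta> *\<^sub>R e) = inner z w + \<delta> * inner z e"
    by (simp add: inner_add_right)
  ultimately show "inner z (w + \<delta> *\<^sub>R e) < m + \<delta>"
    using \<open>0 < \<delta>\<close> by (simp only: distrib_left)
qed

lemma separating_polar_halfspace:
  fixes z w e :: "'b::real_inner"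
  assumes "0 \<le> m" and "inner z w < m" and "\<And>k. k \<in> K \<Longrightarrow> m \<le> inner k w"
    and "\<And>k. k \<in> K \<Longrightarrow> 1 \<le> inner k e"
  obtains v where "\<And>k. k \<in> K \<Longrightarrow> 1 \<le> inner k v" "inner z v < 1"
proof -
  obtain \<delta> where "0 < \<delta>" and K: "\<And>k. k \<in> K \<Longrightarrow> m + \<delta> \<le> inner k (w + \<delta> *\<^sub>R e)"
    and z: "inner z (w + \<delta> *\<^sub>R e) < m + \<delta>"
    using halfspace_tilt assms(2-4) by blast
  define u where "u = w + \<delta> *\<^sub>R e"
  have "0 < m + \<delta>"
    using \<open>0 \<le> m\<close> \<open>0 < \<delta>\<close> by simp
  moreover have "inner k ((1 / (m + \<delta>)) *\<^sub>R u) = inner k u / (m + \<delta>)" for k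
    by simp
  ultimately show ?thesis
    using K z unfolding u_def[symmetric]
    by (intro that[of "(1 / (m + \<delta>)) *\<^sub>R u"]) (simp_all add: le_divide_eq_1_pos divide_less_eq_1_pos)
qed

lemma epi_separating_affine_minorant:
  fixes \<phi> :: "'a::euclidean_space \<Rightarrow> ereal"
  assumes "closed (epi \<phi>)" "convex (epi \<phi>)" "(x0, t0) \<in> epi \<phi>" "\<And>x. 1 \<le> \<phi> x"
    and "(z1, z2) \<notin> epi \<phi>"
  obtains y b where "\<And>x t. (x, t) \<in> epi \<phi> \<Longrightarrow> inner x y + b \<le> t" "z2 < inner z1 y + b"
proof -
  obtain N b0 where z: "inner N (z1, z2) < b0" and K: "\<And>k. k \<in> epi \<phi> \<Longrightarrow> b0 < inner N k"
    using separating_hyperplane_closed_point[OF assms(2,1,5)] by blast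
  obtain A \<beta> where N: "N = (A, \<beta>)"
    by force
  have "0 \<le> \<beta>"
  proof (rule ccontr)
    assume "\<not> 0 \<le> \<beta>"
    define t where "t = max t0 ((inner A x0 - b0) / - \<beta>)"
    have "(x0, t) \<in> epi \<phi>"
      using assms(3) by (auto simp: epi_def t_def intro: order_trans)
    then have "b0 < inner A x0 + \<beta> * t"
      using K[of "(x0, t)"] by (simp add: N)
    moreover have "(inner A x0 - b0) / - \<beta> \<le> t"
      unfolding t_def by (rule max.cobounded2)
    then have "(inner A x0 - b0) / - \<beta> * - \<beta> \<le> t * - \<beta>"
      using \<open>\<not> 0 \<le> \<beta>\<close> by (intro mult_right_mono) auto
    then have "inner A x0 - b0 \<le> t * - \<beta>"
      using \<open>\<not> 0 \<le> \<beta>\<close> by simp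
    ultimately show False
      by (simp add: algebra_simps)
  qed
  have e: "1 \<le> inner k (0, 1)" if "k \<in> epi \<phi>" for k
    using that epi_snd_ge[OF assms(4)] by (cases k) simp
  obtain \<delta> where "0 < \<delta>" and K': "\<And>k. k \<in> epi \<phi> \<Longrightarrow> b0 + \<delta> \<le> inner k (N + \<delta> *\<^sub>R (0, 1))"
    and z': "inner (z1, z2) (N + \<delta> *\<^sub>R (0, 1)) < b0 + \<delta>"
    using halfspace_tilt[of "(z1, z2)" N b0 "epi \<phi>" "(0, 1)"] z K e
    by (auto simp: inner_commute less_imp_le)
  define \<beta>' where "\<beta>' = \<beta> + \<delta>"
  have "0 < \<beta>'"
    using \<open>0 \<le> \<beta>\<close> \<open>0 < \<delta>\<close> by (simp add: \<beta>'_def)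
  show ?thesis
  proof (rule that[of "- (1 / \<beta>') *\<^sub>R A" "(b0 + \<delta>) / \<beta>'"])
    fix x t
    assume "(x, t) \<in> epi \<phi>"
    then have "b0 + \<delta> \<le> inner x A + t * \<beta>'"
      using K'[of "(x, t)"] by (simp add: N \<beta>'_def)
    moreover have "inner x (- (1 / \<beta>') *\<^sub>R A) + (b0 + \<delta>) / \<beta>' = (b0 + \<delta> - inner x A) / \<beta>'"
      by (simp add: diff_divide_distrib)
    ultimately show "inner x (- (1 / \<beta>') *\<^sub>R A) + (b0 + \<delta>) / \<beta>' \<le> t"
      using \<open>0 < \<beta>'\<close> by (simp add: pos_divide_le_eq)
  next
    have "inner z1 A + z2 * \<beta>' < b0 + \<delta>"
      using z' by (simp add: N \<beta>'_def)
    moreover have "inner z1 (- (1 / \<beta>') *\<^sub>R A) + (b0 + \<delta>) / \<beta>' = (b0 + \<delta> - inner z1 A) / \<beta>'"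
      by (simp add: diff_divide_distrib)
    ultimately show "z2 < inner z1 (- (1 / \<beta>') *\<^sub>R A) + (b0 + \<delta>) / \<beta>'"
      using \<open>0 < \<beta>'\<close> by (simp add: pos_less_divide_eq)
  qed
qed

lemma polarT_polarT_epi:
  fixes \<phi> :: "'a::euclidean_space \<Rightarrow> ereal"
  assumes "lsc \<phi>" "convex (epi \<phi>)" "epi \<phi> \<noteq> {}" "\<And>x. 1 \<le> \<phi> x"
    and conj_nonpos: "\<And>y. legendre \<phi> y < \<infinity> \<Longrightarrow> legendre \<phi> y \<le> 0"
  shows "polarT (polarT (epi \<phi>)) = epi \<phi>"
proof
  show "polarT (polarT (epi \<phi>)) \<subseteq> epi \<phi>"
  proof (rule subsetI, rule ccontr)
    fix z
    assume zz: "z \<in> polarT (polarT (epi \<phi>))" and "z \<notin> epi \<phi>"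
    obtain z1 z2 where z: "z = (z1, z2)"
      by force
    obtain x0 t0 where "(x0, t0) \<in> epi \<phi>"
      using assms(3) by auto
    moreover have "closed (epi \<phi>)"
      using \<open>lsc \<phi>\<close> lsc_iff_closed_epi by blast
    ultimately obtain y b where minorant: "\<And>x t. (x, t) \<in> epi \<phi> \<Longrightarrow> inner x y + b \<le> t"
      and above: "z2 < inner z1 y + b"
      using epi_separating_affine_minorant[of \<phi> x0 t0 z1 z2] assms(2,4) \<open>z \<notin> epi \<phi>\<close> z by blast
    have "legendre \<phi> y \<le> ereal (- b)"
      using minorant by (simp add: legendre_le_iff)
    moreover have "legendre \<phi> y < \<infinity>"
      by (rule le_less_trans[OF calculation]) simp
    ultimately have "legendre \<phi> y \<le> ereal (- max 0 b)"
      using conj_nonpos by (simp add: max_def zero_ereal_def)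
    then have raised: "\<forall>x t. (x, t) \<in> epi \<phi> \<longrightarrow> inner x y + max 0 b \<le> t"
      by (simp add: legendre_le_iff)
    have halfspace: "max 0 b \<le> inner k (- y, 1)" if "k \<in> epi \<phi>" for k
    proof (cases k)
      case (Pair x t)
      with that raised have "inner x y + max 0 b \<le> t"
        by blast
      then show ?thesis
        by (simp add: Pair max_def split: if_splits)
    qed
    have "inner z (- y, 1) < max 0 b"
      using above z by simp
    moreover have "1 \<le> inner k (0, 1)" if "k \<in> epi \<phi>" for k
      using that epi_snd_ge[OF assms(4)] by (cases k) simp
    ultimately obtain v where v: "\<And>k. k \<in> epi \<phi> \<Longrightarrow> 1 \<le> inner k v" and "inner z v < 1"
      using separating_polar_halfspace[OF max.cobounded1 _ halfspace] by blast
    have "v \<in> polarT (epi \<phi>)"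
      using v by (simp add: polarT_def)
    with zz have "1 \<le> inner v z"
      unfolding polarT_def by blast
    with \<open>inner z v < 1\<close> show False
      by (simp add: inner_commute)
  qed
  show "epi \<phi> \<subseteq> polarT (polarT (epi \<phi>))"
    by (rule subset_polarT_polarT)
qed

lemma epi_phiK_classS:
  assumes "K \<in> classS"
  shows "epi (phiK K) = K"
proof (rule epi_phiK)
  show "closed K"
    using assms by (simp add: classS_def classC_closed)
  show "(x, s) \<in> K" if "(x, t) \<in> K" "t \<le> s" for x t s
    using classS_upward[OF assms that] .
qed

lemma phiK_in_classF:
  fixes K :: "('a::euclidean_space \<times> real) set"
  assumes K: "K \<in> classS"
  shows "phiK K \<in> classF"
proof -
  have C: "K \<in> classC"
    using K by (simp add: classS_def)
  have E: "epi (phiK K) = K"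
    using K by (rule epi_phiK_classS)
  have ge: "1 \<le> phiK K x" for x
    unfolding phiK_def using classS_snd_ge_1[OF K] by (auto intro: INF_greatest)
  have "(0, 1) \<in> epi (phiK K)"
    using K E by (simp add: classS_def en_def)
  then have phi0: "phiK K 0 = 1"
    using ge[of 0] by (simp add: epi_def one_ereal_def)
  have "lsc (phiK K)"
    unfolding lsc_iff_closed_epi E using C by (rule classC_closed)
  moreover have "phiK K x \<noteq> -\<infinity>" for x
    using ge[of x] by auto
  then have "convex_fun (phiK K)"
    unfolding convex_fun_def E using classC_convex[OF C] by blast
  moreover have "-1 \<le> legendre (phiK K) y" for y
    unfolding legendre_def by (rule SUP_upper2[of 0]) (simp_all add: phi0 flip: zero_ereal_def)
  moreover have "legendre (phiK K) y \<le> 0" if "legendre (phiK K) y < \<infinity>" for y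
    using that by (intro legendre_nonpos) (simp_all add: E classC_scaleR[OF C])
  ultimately show ?thesis
    using phi0 ge by (simp add: classF_def ldom_def)
qed

lemma classF_ge_1:
  assumes "\<phi> \<in> classF"
  shows "1 \<le> \<phi> x"
proof -
  have "\<phi> 0 = 1" "\<forall>x. \<phi> 0 \<le> \<phi> x"
    using assms unfolding classF_def by blast+
  then show ?thesis
    by simp
qed

lemma epi_in_classS:
  fixes \<phi> :: "'a::euclidean_space \<Rightarrow> ereal"
  assumes F: "\<phi> \<in> classF"
  shows "epi \<phi> \<in> classS"
proof -
  have ge: "\<And>x. 1 \<le> \<phi> x"
    using F by (rule classF_ge_1)
  have en: "en \<in> epi \<phi>"
    using F by (simp add: classF_def en_def epi_def)
  have "lsc \<phi>" "convex (epi \<phi>)"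
    and "\<And>y. legendre \<phi> y < \<infinity> \<Longrightarrow> legendre \<phi> y \<le> 0"
    using F by (simp_all add: classF_def convex_fun_def ldom_def)
  then have "polarT (polarT (epi \<phi>)) = epi \<phi>"
    using en ge by (intro polarT_polarT_epi) auto
  then have "epi \<phi> \<in> classC"
    unfolding classC_def by (metis rangeI)
  moreover have "(0, 0) \<notin> epi \<phi>"
    using epi_snd_ge[OF ge, of 0 0] by auto
  moreover have "norm (en :: 'a \<times> real) \<le> norm k" if "k \<in> epi \<phi>" for k
  proof (cases k)
    case (Pair x t)
    then have "1 \<le> t"
      using epi_snd_ge[OF ge] that by (simp add: one_ereal_def)
    then show ?thesis
      using norm_snd_le[of t x] by (simp add: Pair en_def)
  qed
  ultimately show ?thesis
    using en by (auto simp: classS_def)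
qed

theorem proposition5p3:
  shows "(\<forall>K\<in>(classS :: ('a::euclidean_space \<times> real) set set).
            epi (phiK K) = K \<and> polarT K = epi (Ttilde (phiK K)))
         \<and> bij_betw phiK (classS :: ('a::euclidean_space \<times> real) set set) classF"
proof (intro conjI ballI)
  fix K :: "('a \<times> real) set"
  assume K: "K \<in> classS"
  then show "epi (phiK K) = K"
    by (rule epi_phiK_classS)
  have F: "phiK K \<in> classF"
    using K by (rule phiK_in_classF)
  have "0 < phiK K x" for x
    by (rule order.strict_trans2[OF _ classF_ge_1[OF F]]) simp
  moreover have "phiK K 0 < \<infinity>"
    using F by (simp add: classF_def)
  ultimately show "polarT K = epi (Ttilde (phiK K))"
    using polarT_epi_eq_epi_Ttilde[of "phiK K"] epi_phiK_classS[OF K] by simp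
next
  show "bij_betw phiK (classS :: ('a \<times> real) set set) classF"
    by (rule bij_betw_byWitness[where f' = epi])
      (simp_all add: epi_phiK_classS phiK_epi image_subset_iff phiK_in_classF epi_in_classS)
qed

end
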